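(* Let $n=2$ and let $M$ be a Griffiths positive $2\times 2$ matrix of constant coefficient $(1,1)$-forms on $\mathbb{C}^2$. Then $\det(M)$ is a Hodge-Riemann form (with respect to any Kähler form $\omega$).
   Context: $V^{p,q}$ is the space of constant coefficient $(p,q)$-forms on $\mathbb{C}^n$; $V^{k,k}_{\mathbb{R}}$ is the set of real forms $\Omega=\overline{\Omega}$ in $V^{k,k}$. A $(1,1)$-form is Kähler if it equals $\sum_l\frac{\sqrt{-1}}{2}dw_l\wedge d\overline{w_l}$ in some complex linear coordinates. A matrix $M=(\alpha_{i,j})$ of $(1,1)$-forms with $\alpha_{i,j}=\overline{\alpha_{j,i}}$ is Griffiths positive if $\sum_{i,j}\theta_i\alpha_{i,j}\overline{\theta_j}$ is Kähler for all nonzero $\theta$; $\det(M)=\alpha_{1,1}\wedge\alpha_{2,2}-\alpha_{1,2}\wedge\alpha_{2,1}$. A form $\Omega\in V^{k,k}$ is a Lefschetz form for bidegree $(p,q)$ (with $p+q=n-k$) if $\alpha\mapsto\alpha\wedge\Omega$ is an isomorphism $V^{p,q}\to V^{n-q,n-p}$. Given a Kähler form $\omega$, $\Omega\in V^{k,k}_{\mathbb{R}}$ is a Hodge-Riemann form if for every $(p,q)$ with $p,q\geqslant 0$, $p+q=n-k$, there is a continuous path $\Omega_t\in V^{k,k}_{\mathbb{R}}$, $t\in[0,1]$, with $\Omega_0=\Omega$, $\Omega_1=\omega^k$, such that $\Omega_t\wedge\omega^{2r}$ is a Lefschetz form for bidegree $(p-r,q-r)$ for all $0\leqslant r\leqslant\min\{p,q\}$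 and all $t\in[0,1]$. *)

theory Defs
  imports "HOL-Analysis.Analysis"
begin

text \<open>We use the generators
  e_0,...,e_{2n-1} of the complex exterior algebra, where e_j = dz_j and
  e_{n+j} = dzbar_j for j < n.  A form is given by its coefficient function:
  f S is the coefficient of e_{s_1} wedge ... wedge e_{s_m}, where
  s_1 < ... < s_m enumerate the finite set S.\<close>

type_synonym form = "nat set \<Rightarrow> complex"

definition shuffle_sign :: "nat set \<Rightarrow> nat set \<Rightarrow> complex" where
  "shuffle_sign A B = (-1) ^ card {(a, b). a \<in> A \<and> b \<in> B \<and> b < a}"

definition wedge :: "form \<Rightarrow> form \<Rightarrow> form" where
  "wedge f g = (\<lambda>S. \<Sum>A\<in>Pow S. shuffle_sign A (S - A) * f A * g (S - A))"

definition unit_form :: form where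
  "unit_form = (\<lambda>S. if S = {} then 1 else 0)"

primrec wpow :: "form \<Rightarrow> nat \<Rightarrow> form" where
  "wpow f 0 = unit_form"
| "wpow f (Suc k) = wedge f (wpow f k)"

definition Vpq :: "nat \<Rightarrow> nat \<Rightarrow> nat \<Rightarrow> form set" where
  "Vpq n p q = {f. \<forall>S. f S \<noteq> 0 \<longrightarrow>
      S \<subseteq> {..<2*n} \<and> card (S \<inter> {..<n}) = p \<and> card (S \<inter> {n..<2*n}) = q}"

text \<open>Conjugation swaps dz_j and dzbar_j and conjugates coefficients.\<close>
definition swap_idx :: "nat \<Rightarrow> nat \<Rightarrow> nat" where
  "swap_idx n j = (if j < n then j + n else if j < 2*n then j - n else j)"

definition conj_inv :: "nat \<Rightarrow> nat set \<Rightarrow> nat" where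
  "conj_inv n S = card {(a, b). a \<in> S \<and> b \<in> S \<and> a < b \<and> swap_idx n b < swap_idx n a}"

definition conj_form :: "nat \<Rightarrow> form \<Rightarrow> form" where
  "conj_form n f = (\<lambda>T. (-1) ^ conj_inv n (swap_idx n ` T) * cnj (f (swap_idx n ` T)))"

definition VR :: "nat \<Rightarrow> nat \<Rightarrow> form set" where
  "VR n k = {f \<in> Vpq n k k. conj_form n f = f}"

text \<open>The (1,0)-form sum_j v_j dz_j.\<close>
definition dz_form :: "nat \<Rightarrow> (nat \<Rightarrow> complex) \<Rightarrow> form" where
  "dz_form n v = (\<lambda>S. if is_singleton S \<and> the_elem S < n then v (the_elem S) else 0)"

definition invertible_mat :: "nat \<Rightarrow> (nat \<Rightarrow> nat \<Rightarrow> complex) \<Rightarrow> bool" where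
  "invertible_mat n A \<longleftrightarrow> (\<exists>B. \<forall>i<n. \<forall>j<n.
      (\<Sum>k<n. A i k * B k j) = (if i = j then 1 else 0))"

text \<open>Kaehler: equals sum_l (i/2) dw_l wedge conj(dw_l) for linear coordinates w = A z.\<close>
definition kaehler :: "nat \<Rightarrow> form \<Rightarrow> bool" where
  "kaehler n \<alpha> \<longleftrightarrow> (\<exists>A. invertible_mat n A \<and>
      \<alpha> = (\<lambda>S. \<Sum>l<n. (\<i> / 2) *
              wedge (dz_form n (A l)) (conj_form n (dz_form n (A l))) S))"

definition griffiths_positive :: "nat \<Rightarrow> nat \<Rightarrow> (nat \<Rightarrow> nat \<Rightarrow> form) \<Rightarrow> bool" where
  "griffiths_positive n r M \<longleftrightarrow>
     (\<forall>i<r. \<forall>j<r. M i j = conj_form n (M j i)) \<and>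
     (\<forall>\<theta> :: nat \<Rightarrow> complex. (\<exists>i<r. \<theta> i \<noteq> 0) \<longrightarrow>
        kaehler n (\<lambda>S. \<Sum>i<r. \<Sum>j<r. \<theta> i * M i j S * cnj (\<theta> j)))"

definition det2 :: "(nat \<Rightarrow> nat \<Rightarrow> form) \<Rightarrow> form" where
  "det2 M = (\<lambda>S. wedge (M 0 0) (M 1 1) S - wedge (M 0 1) (M 1 0) S)"

definition lefschetz :: "nat \<Rightarrow> nat \<Rightarrow> nat \<Rightarrow> form \<Rightarrow> bool" where
  "lefschetz n p q \<Omega> \<longleftrightarrow> bij_betw (\<lambda>\<alpha>. wedge \<alpha> \<Omega>) (Vpq n p q) (Vpq n (n - q) (n - p))"

definition hodge_riemann :: "nat \<Rightarrow> form \<Rightarrow> nat \<Rightarrow> form \<Rightarrow> bool" where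
  "hodge_riemann n \<omega> k \<Omega> \<longleftrightarrow> \<Omega> \<in> VR n k \<and>
     (\<forall>p q. p + q = n - k \<longrightarrow>
        (\<exists>P :: real \<Rightarrow> form.
            (\<forall>S. continuous_on {0..1} (\<lambda>t. P t S)) \<and>
            P 0 = \<Omega> \<and> P 1 = wpow \<omega> k \<and>
            (\<forall>t\<in>{0..1}. P t \<in> VR n k) \<and>
            (\<forall>r \<le> min p q. \<forall>t\<in>{0..1}.
                lefschetz n (p - r) (q - r) (wedge (P t) (wpow \<omega> (2 * r))))))"

end

theory Submission
  imports Defs
begin

(* For n = k = 2 the only bidegree is (p, q) = (0, 0), and det M is a Hodge-Riemann form as soon
   as its coefficient on dz_0 dz_1 dzbar_0 dzbar_1 is a positive real, like that of \<omega>^2: the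
   segment from det M to \<omega>^2 then consists of real top degree forms with nonzero coefficient,
   and these are Lefschetz for bidegree (0, 0).

   Write M_ij = (\<i>/2) \<Sum> h_ij(k, l) dz_k dzbar_l. The top coefficient of det M is a quarter of
   D(h_00, h_11) - D(h_01, h_10), where D is the mixed discriminant of 2x2 matrices. Griffiths
   positivity says that the block form \<Sum> \<theta>_i cnj \<theta>_j x^T h_ij cnj x is positive on every
   tensor \<theta> (x) x. In a basis e_1, e_2 that is orthogonal for h_00 this yields
   |h_01(e_k, e_k)|^2 < h_00(e_k, e_k) h_11(e_k, e_k), and the AM-GM inequality then makes the
   mixed discriminant difference positive. *)

section \<open>Constant coefficient forms\<close>

lemma VpqD:
  assumes "f \<in> Vpq n p q" and "f S \<noteq> 0"
  shows "S \<subseteq> {..<2*n}" "card (S \<inter> {..<n}) = p" "card (S \<inter> {n..<2*n}) = q"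
  using assms by (auto simp: Vpq_def)

lemma Vpq_eq_0_if_infinite:
  assumes "f \<in> Vpq n p q" "infinite S"
  shows "f S = 0"
proof (rule ccontr)
  assume "f S \<noteq> 0"
  then have "S \<subseteq> {..<2*n}" by (rule VpqD(1)[OF assms(1)])
  then show False using assms(2) finite_subset by blast
qed

lemma wedge_eq_0_if_infinite: "infinite S \<Longrightarrow> wedge f g S = 0"
  unfolding wedge_def by simp

lemma wedge_eq_sum_subset:
  assumes "finite S" "X \<subseteq> Pow S" "\<forall>A\<in>Pow S - X. f A * g (S - A) = 0"
  shows "wedge f g S = (\<Sum>A\<in>X. shuffle_sign A (S - A) * f A * g (S - A))"
  unfolding wedge_def by (rule sum.mono_neutral_right) (use assms in auto)

lemma Vpq_sum:
  assumes "\<forall>l\<in>L. F l \<in> Vpq n p q"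
  shows "(\<lambda>S. \<Sum>l\<in>L. c l * F l S) \<in> Vpq n p q"
  unfolding Vpq_def mem_Collect_eq
proof (intro allI impI)
  fix S assume "(\<Sum>l\<in>L. c l * F l S) \<noteq> 0"
  then obtain l where "l \<in> L" "c l * F l S \<noteq> 0"
    by (meson sum.not_neutral_contains_not_neutral)
  then have "F l \<in> Vpq n p q" "F l S \<noteq> 0" using assms by auto
  then show "S \<subseteq> {..<2 * n} \<and> card (S \<inter> {..<n}) = p \<and> card (S \<inter> {n..<2 * n}) = q"
    by (auto simp: Vpq_def)
qed

lemma Vpq_lincomb:
  assumes "f \<in> Vpq n p q" "g \<in> Vpq n p q"
  shows "(\<lambda>S. a * f S + b * g S) \<in> Vpq n p q"
  unfolding Vpq_def mem_Collect_eq
proof (intro allI impI)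
  fix S assume "a * f S + b * g S \<noteq> 0"
  then have "f S \<noteq> 0 \<or> g S \<noteq> 0" by auto
  then show "S \<subseteq> {..<2 * n} \<and> card (S \<inter> {..<n}) = p \<and> card (S \<inter> {n..<2 * n}) = q"
    using assms unfolding Vpq_def by blast
qed

lemma wedge_Vpq:
  assumes f: "f \<in> Vpq n p q" and g: "g \<in> Vpq n p' q'"
  shows "wedge f g \<in> Vpq n (p + p') (q + q')"
  unfolding Vpq_def mem_Collect_eq
proof (intro allI impI)
  fix S assume "wedge f g S \<noteq> 0"
  then obtain A where "A \<in> Pow S" "shuffle_sign A (S - A) * f A * g (S - A) \<noteq> 0"
    unfolding wedge_def by (meson sum.not_neutral_contains_not_neutral)
  then have A: "S = A \<union> (S - A)" and fA: "f A \<noteq> 0" and gA: "g (S - A) \<noteq> 0" by auto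
  have sub: "A \<subseteq> {..<2*n}" "S - A \<subseteq> {..<2*n}"
    using VpqD(1)[OF f fA] VpqD(1)[OF g gA] by auto
  have "card (S \<inter> X) = card (A \<inter> X) + card ((S - A) \<inter> X)" for X
  proof -
    have "S \<inter> X = (A \<inter> X) \<union> ((S - A) \<inter> X)" using A by blast
    moreover have "finite A" "finite (S - A)" using sub finite_subset by auto
    then have "card ((A \<inter> X) \<union> ((S - A) \<inter> X)) = card (A \<inter> X) + card ((S - A) \<inter> X)"
      by (intro card_Un_disjoint) auto
    ultimately show ?thesis by simp
  qed
  then show "S \<subseteq> {..<2 * n} \<and> card (S \<inter> {..<n}) = p + p' \<and> card (S \<inter> {n..<2 * n}) = q + q'"
    using sub A VpqD(2,3)[OF f fA] VpqD(2,3)[OF g gA] by (metis Un_subset_iff)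
qed

lemma wedge_unit_form_right:
  assumes "f \<in> Vpq n p q"
  shows "wedge f unit_form = f"
proof
  fix S show "wedge f unit_form S = f S"
  proof (cases "finite S")
    case True
    have "wedge f unit_form S = (\<Sum>A\<in>{S}. shuffle_sign A (S - A) * f A * unit_form (S - A))"
      by (rule wedge_eq_sum_subset) (use True in \<open>auto simp: unit_form_def\<close>)
    also have "\<dots> = f S" by (simp add: shuffle_sign_def unit_form_def)
    finally show ?thesis .
  qed (use Vpq_eq_0_if_infinite[OF assms] wedge_eq_0_if_infinite in simp)
qed

lemma Vpq_0_0_support:
  assumes "f \<in> Vpq n 0 0" "f S \<noteq> 0"
  shows "S = {}"
proof -
  have "finite S" using VpqD(1)[OF assms] finite_subset by blast
  then have "S \<inter> {..<n} = {}" "S \<inter> {n..<2*n} = {}" using VpqD(2,3)[OF assms] by auto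
  moreover have "{..<2*n} = {..<n} \<union> {n..<2*n}" by auto
  ultimately show ?thesis using VpqD(1)[OF assms] by blast
qed

lemma Vpq_n_n_support:
  assumes "f \<in> Vpq n n n" "f S \<noteq> 0"
  shows "S = {..<2*n}"
proof -
  have "S \<inter> {..<n} = {..<n}"
    by (rule card_subset_eq) (use VpqD(2)[OF assms] in auto)
  moreover have "S \<inter> {n..<2*n} = {n..<2*n}"
    by (rule card_subset_eq) (use VpqD(3)[OF assms] in auto)
  moreover have "{..<2*n} = {..<n} \<union> {n..<2*n}" by auto
  ultimately show ?thesis using VpqD(1)[OF assms] by blast
qed

lemma wedge_Vpq_0_0_left:
  assumes \<alpha>: "\<alpha> \<in> Vpq n 0 0" and \<Omega>: "\<Omega> \<in> Vpq n p q"
  shows "wedge \<alpha> \<Omega> = (\<lambda>S. \<alpha> {} * \<Omega> S)"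
proof
  fix S show "wedge \<alpha> \<Omega> S = \<alpha> {} * \<Omega> S"
  proof (cases "finite S")
    case True
    have "wedge \<alpha> \<Omega> S = (\<Sum>A\<in>{{}}. shuffle_sign A (S - A) * \<alpha> A * \<Omega> (S - A))"
      by (rule wedge_eq_sum_subset) (use True Vpq_0_0_support[OF \<alpha>] in auto)
    also have "\<dots> = \<alpha> {} * \<Omega> S" by (simp add: shuffle_sign_def)
    finally show ?thesis .
  qed (use Vpq_eq_0_if_infinite[OF \<Omega>] wedge_eq_0_if_infinite in simp)
qed

lemma lefschetz_0_0_top_degree:
  assumes \<Omega>: "\<Omega> \<in> Vpq n n n" and nz: "\<Omega> {..<2*n} \<noteq> 0"
  shows "lefschetz n 0 0 \<Omega>"
proof -
  let ?L = "\<lambda>\<alpha>. wedge \<alpha> \<Omega>"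
  have eq_zero: "\<alpha> S = 0" if "\<alpha> \<in> Vpq n 0 0" "S \<noteq> {}" for \<alpha> S
    using Vpq_0_0_support that by blast
  have "inj_on ?L (Vpq n 0 0)"
  proof (rule inj_onI)
    fix \<alpha> \<beta> assume \<alpha>: "\<alpha> \<in> Vpq n 0 0" and \<beta>: "\<beta> \<in> Vpq n 0 0" and "?L \<alpha> = ?L \<beta>"
    then have "\<alpha> {} * \<Omega> {..<2*n} = \<beta> {} * \<Omega> {..<2*n}"
      using wedge_Vpq_0_0_left[OF _ \<Omega>] by metis
    then have "\<alpha> {} = \<beta> {}" using nz by simp
    show "\<alpha> = \<beta>"
    proof
      fix S show "\<alpha> S = \<beta> S"
        using \<open>\<alpha> {} = \<beta> {}\<close> eq_zero[OF \<alpha>, of S] eq_zero[OF \<beta>, of S] by (cases "S = {}") auto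
    qed
  qed
  moreover have "?L ` Vpq n 0 0 \<subseteq> Vpq n n n"
    using wedge_Vpq_0_0_left[OF _ \<Omega>] \<Omega> by (auto simp: Vpq_def)
  moreover have "g \<in> ?L ` Vpq n 0 0" if g: "g \<in> Vpq n n n" for g
  proof
    define \<alpha> where "\<alpha> = (\<lambda>S::nat set. if S = {} then g {..<2*n} / \<Omega> {..<2*n} else 0)"
    show \<alpha>: "\<alpha> \<in> Vpq n 0 0" by (auto simp: Vpq_def \<alpha>_def)
    show "g = ?L \<alpha>"
    proof
      fix S
      have L_\<alpha>: "?L \<alpha> S = \<alpha> {} * \<Omega> S" by (simp add: wedge_Vpq_0_0_left[OF \<alpha> \<Omega>])
      show "g S = ?L \<alpha> S"
      proof (cases "S = {..<2*n}")
        case False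
        then have "g S = 0" "\<Omega> S = 0" using Vpq_n_n_support[OF g] Vpq_n_n_support[OF \<Omega>] by blast+
        then show ?thesis using L_\<alpha> by simp
      qed (use L_\<alpha> nz in \<open>simp add: \<alpha>_def\<close>)
    qed
  qed
  ultimately show ?thesis unfolding lefschetz_def bij_betw_def by auto
qed

section \<open>Hermitian 2x2 matrices\<close>

lemma sum_lessThan_2: "(\<Sum>k<2::nat. f k) = f 0 + f 1"
  by (simp add: numeral_2_eq_2)

lemma complex_pos_iff: "0 < (z::complex) \<longleftrightarrow> (\<exists>r>0. z = complex_of_real r)"
  by (auto simp: less_complex_def complex_eq_iff)

definition adjoint2 :: "(nat \<Rightarrow> nat \<Rightarrow> complex) \<Rightarrow> (nat \<Rightarrow> nat \<Rightarrow> complex) \<Rightarrow> bool" where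
  "adjoint2 F G \<longleftrightarrow> (\<forall>j<2. \<forall>k<2. G j k = cnj (F k j))"

abbreviation hermitian2 :: "(nat \<Rightarrow> nat \<Rightarrow> complex) \<Rightarrow> bool" where
  "hermitian2 F \<equiv> adjoint2 F F"

lemma adjoint2D:
  assumes "adjoint2 F G"
  shows "G 0 0 = cnj (F 0 0)" "G 0 1 = cnj (F 1 0)" "G 1 0 = cnj (F 0 1)" "G 1 1 = cnj (F 1 1)"
  using assms unfolding adjoint2_def by simp_all

lemma hermitian2D:
  assumes "hermitian2 F"
  shows "F 1 0 = cnj (F 0 1)" "cnj (F 0 0) = F 0 0" "cnj (F 1 1) = F 1 1"
  using adjoint2D(3)[OF assms] adjoint2D(1,4)[OF assms, symmetric] by blast+

definition quad_form :: "(nat \<Rightarrow> nat \<Rightarrow> complex) \<Rightarrow> complex \<Rightarrow> complex \<Rightarrow> complex" where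
  "quad_form F x0 x1 =
     F 0 0 * x0 * cnj x0 + F 0 1 * x0 * cnj x1 + F 1 0 * x1 * cnj x0 + F 1 1 * x1 * cnj x1"

text \<open>The mixed discriminant, i.e. det (F + G) - det F - det G.\<close>
definition mixed_disc :: "(nat \<Rightarrow> nat \<Rightarrow> complex) \<Rightarrow> (nat \<Rightarrow> nat \<Rightarrow> complex) \<Rightarrow> complex" where
  "mixed_disc F G = F 0 0 * G 1 1 + F 1 1 * G 0 0 - F 0 1 * G 1 0 - F 1 0 * G 0 1"

lemma quad_form_adjoint2:
  assumes "adjoint2 F G"
  shows "quad_form G x0 x1 = cnj (quad_form F x0 x1)"
  unfolding quad_form_def adjoint2D[OF assms] by (simp add: algebra_simps)

text \<open>The Hermitian form of the block matrix [[a, b], [b*, c]] at the tensor \<theta> \<otimes> x.\<close>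
definition block_form ::
    "(nat \<Rightarrow> nat \<Rightarrow> complex) \<Rightarrow> (nat \<Rightarrow> nat \<Rightarrow> complex) \<Rightarrow> (nat \<Rightarrow> nat \<Rightarrow> complex) \<Rightarrow>
     complex \<Rightarrow> complex \<Rightarrow> complex \<Rightarrow> complex \<Rightarrow> complex" where
  "block_form a b c t0 t1 x0 x1 =
     t0 * cnj t0 * quad_form a x0 x1 + t0 * cnj t1 * quad_form b x0 x1
     + t1 * cnj t0 * cnj (quad_form b x0 x1) + t1 * cnj t1 * quad_form c x0 x1"

definition block_positive ::
    "(nat \<Rightarrow> nat \<Rightarrow> complex) \<Rightarrow> (nat \<Rightarrow> nat \<Rightarrow> complex) \<Rightarrow> (nat \<Rightarrow> nat \<Rightarrow> complex) \<Rightarrow> bool" where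
  "block_positive a b c \<longleftrightarrow> (\<forall>t0 t1 x0 x1. (t0 \<noteq> 0 \<or> t1 \<noteq> 0) \<longrightarrow> (x0 \<noteq> 0 \<or> x1 \<noteq> 0) \<longrightarrow>
     0 < block_form a b c t0 t1 x0 x1)"

text \<open>Testing with \<theta> = (1, 0), (0, 1) and (- cnj \<beta>, quad_form a x) gives a
  Cauchy--Schwarz inequality for the off-diagonal block along x.\<close>
lemma block_positive_along_vector:
  assumes pos: "block_positive a b c" and x: "x0 \<noteq> 0 \<or> x1 \<noteq> 0"
  obtains p r where "p > 0" "r > 0" "quad_form a x0 x1 = of_real p" "quad_form c x0 x1 = of_real r"
    "(cmod (quad_form b x0 x1))\<^sup>2 < p * r"
proof -
  have pos': "\<exists>N>0. block_form a b c t0 t1 x0 x1 = of_real N" if "t0 \<noteq> 0 \<or> t1 \<noteq> 0" for t0 t1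
    using pos x that unfolding block_positive_def complex_pos_iff by blast
  obtain p where p: "p > 0" "quad_form a x0 x1 = of_real p"
    using pos'[of 1 0] by (auto simp: block_form_def)
  obtain r where r: "r > 0" "quad_form c x0 x1 = of_real r"
    using pos'[of 0 1] by (auto simp: block_form_def)
  define \<beta> where "\<beta> = quad_form b x0 x1"
  obtain N where N: "N > 0" "block_form a b c (- cnj \<beta>) (of_real p) x0 x1 = of_real N"
    using pos'[of _ "of_real p"] p(1) by auto
  have "block_form a b c (- cnj \<beta>) (of_real p) x0 x1 = of_real (p * (p * r - (cmod \<beta>)\<^sup>2))"
    unfolding block_form_def p(2) r(2) \<beta>_def[symmetric] of_real_mult of_real_diff complex_norm_square
    by (simp add: algebra_simps)
  then have "p * (p * r - (cmod \<beta>)\<^sup>2) > 0" using N by (metis of_real_eq_iff)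
  then have "(cmod \<beta>)\<^sup>2 < p * r" using p(1) by (simp add: zero_less_mult_iff)
  then show ?thesis using that p r \<beta>_def by blast
qed

lemma two_mult_less_cross_sum:
  fixes u v p r a c :: real
  assumes "0 \<le> u" "0 \<le> v" "u\<^sup>2 < p * r" "v\<^sup>2 < a * c" "p > 0" "r > 0" "a > 0" "c > 0"
  shows "2 * u * v < p * c + a * r"
proof -
  have "(u * v)\<^sup>2 < (p * r) * (a * c)"
    unfolding power_mult_distrib by (rule mult_strict_mono) (use assms in auto)
  also have "\<dots> \<le> ((p * c + a * r) / 2)\<^sup>2"
    using zero_le_power2[of "p * c - a * r"] by (simp add: power2_eq_square algebra_simps)
  finally have "u * v < (p * c + a * r) / 2"
    by (rule power_less_imp_less_base) (use assms in auto)
  then show ?thesis by simp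
qed

lemma Re_mult_cnj_add_le: "Re (b * cnj z + cnj b * z) \<le> 2 * cmod b * cmod z"
proof -
  have "Re (b * cnj z + cnj b * z) = 2 * Re (b * cnj z)" by simp
  also have "\<dots> \<le> 2 * cmod (b * cnj z)" using complex_Re_le_cmod[of "b * cnj z"] by linarith
  also have "\<dots> = 2 * cmod b * cmod z" by (simp add: norm_mult)
  finally show ?thesis .
qed

text \<open>Expansion of the mixed discriminant in the a-orthogonal basis (1, 0), (- a 1 0, a 0 0).\<close>
lemma mixed_disc_expansion:
  assumes "hermitian2 a" "hermitian2 c" "adjoint2 b b'"
  shows "a 0 0 * a 0 0 * (mixed_disc a c - mixed_disc b b') =
     a 0 0 * quad_form c (- a 1 0) (a 0 0) + quad_form a (- a 1 0) (a 0 0) * c 0 0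
     - (b 0 0 * cnj (quad_form b (- a 1 0) (a 0 0)) + cnj (b 0 0) * quad_form b (- a 1 0) (a 0 0))
     + (b 0 1 * a 0 0 - b 0 0 * a 0 1) * cnj (b 0 1 * a 0 0 - b 0 0 * a 0 1)
     + (b 1 0 * a 0 0 - b 0 0 * a 1 0) * cnj (b 1 0 * a 0 0 - b 0 0 * a 1 0)"
  using hermitian2D[OF assms(1)] hermitian2D[OF assms(2)] adjoint2D[OF assms(3)]
  unfolding quad_form_def mixed_disc_def by (simp add: algebra_simps)

lemma mixed_disc_diff_real:
  assumes "hermitian2 a" "hermitian2 c" "adjoint2 b b'"
  shows "mixed_disc a c - mixed_disc b b' \<in> \<real>"
  using hermitian2D[OF assms(1)] hermitian2D[OF assms(2)] adjoint2D[OF assms(3)]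
  unfolding Reals_cnj_iff mixed_disc_def by (simp add: algebra_simps)

lemma mixed_disc_pos:
  assumes herm: "hermitian2 a" "hermitian2 c" "adjoint2 b b'" and pos: "block_positive a b c"
  shows "0 < mixed_disc a c - mixed_disc b b'"
proof -
  define Q where "Q = mixed_disc a c - mixed_disc b b'"
  obtain p r where pr: "p > 0" "r > 0" "quad_form a 1 0 = of_real p" "quad_form c 1 0 = of_real r"
    "(cmod (quad_form b 1 0))\<^sup>2 < p * r"
    using block_positive_along_vector[OF pos, of 1 0] by auto
  have a00: "a 0 0 = of_real p" and c00: "c 0 0 = of_real r" and b00: "quad_form b 1 0 = b 0 0"
    using pr by (simp_all add: quad_form_def)
  obtain p' r' where pr': "p' > 0" "r' > 0" "quad_form a (- a 1 0) (a 0 0) = of_real p'"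
    "quad_form c (- a 1 0) (a 0 0) = of_real r'" "(cmod (quad_form b (- a 1 0) (a 0 0)))\<^sup>2 < p' * r'"
    using block_positive_along_vector[OF pos, of "- a 1 0" "a 0 0"] a00 pr(1) by auto
  define \<beta> where "\<beta> = quad_form b (- a 1 0) (a 0 0)"
  define y1 where "y1 = b 0 1 * a 0 0 - b 0 0 * a 0 1"
  define y2 where "y2 = b 1 0 * a 0 0 - b 0 0 * a 1 0"
  have Q_real: "Q = of_real (Re Q)"
    using mixed_disc_diff_real[OF herm] unfolding Q_def by (metis of_real_Re)
  have "of_real (p * p * Re Q) = a 0 0 * a 0 0 * Q"
    using a00 Q_real by (metis of_real_mult)
  also have "\<dots> = of_real (p * r' + p' * r - Re (b 0 0 * cnj \<beta> + cnj (b 0 0) * \<beta>)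
      + (cmod y1)\<^sup>2 + (cmod y2)\<^sup>2)"
  proof -
    have cross_real: "b 0 0 * cnj \<beta> + cnj (b 0 0) * \<beta> = of_real (Re (b 0 0 * cnj \<beta> + cnj (b 0 0) * \<beta>))"
      by (simp add: complex_eq_iff)
    show ?thesis
      unfolding of_real_add of_real_diff complex_norm_square cross_real[symmetric] Q_def
        mixed_disc_expansion[OF herm] \<beta>_def[symmetric] y1_def[symmetric] y2_def[symmetric]
      using a00 c00 pr'(3,4) by simp
  qed
  finally have expansion: "p * p * Re Q = p * r' + p' * r - Re (b 0 0 * cnj \<beta> + cnj (b 0 0) * \<beta>)
      + (cmod y1)\<^sup>2 + (cmod y2)\<^sup>2"
    using of_real_eq_iff by blast
  have "Re (b 0 0 * cnj \<beta> + cnj (b 0 0) * \<beta>) \<le> 2 * cmod (b 0 0) * cmod \<beta>"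
    by (rule Re_mult_cnj_add_le)
  also have "\<dots> < p * r' + p' * r"
    by (rule two_mult_less_cross_sum) (use pr pr' b00 \<beta>_def in auto)
  finally have "p * p * Re Q > 0"
    using expansion zero_le_power2[of "cmod y1"] zero_le_power2[of "cmod y2"] by linarith
  then have "Re Q > 0" using pr(1) by (simp add: zero_less_mult_iff)
  then show ?thesis using Q_real unfolding Q_def complex_pos_iff by blast
qed

section \<open>Forms on C^2\<close>

lemma card_Int_doubleton_eq_1:
  assumes "card (S \<inter> {a, b}) = 1"
  shows "S \<inter> {a, b} = {a} \<or> S \<inter> {a, b} = {b}"
proof -
  obtain x where x: "S \<inter> {a, b} = {x}" using assms by (auto simp: card_1_singleton_iff)
  then have "x = a \<or> x = b" by blast
  then show ?thesis using x by blast
qed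

lemma Vpq_2_support:
  assumes "f \<in> Vpq 2 p q" "f S \<noteq> 0"
  shows "S = (S \<inter> {0,1}) \<union> (S \<inter> {2,3})" "card (S \<inter> {0,1}) = p" "card (S \<inter> {2,3}) = q"
proof -
  have ivl: "{..<2::nat} = {0,1}" "{2..<2*2::nat} = {2,3}" "{..<2*2::nat} = {0,1,2,3}" by auto
  show "card (S \<inter> {0,1}) = p" using VpqD(2)[OF assms] unfolding ivl .
  show "card (S \<inter> {2,3}) = q" using VpqD(3)[OF assms] unfolding ivl .
  show "S = (S \<inter> {0,1}) \<union> (S \<inter> {2,3})" using VpqD(1)[OF assms] unfolding ivl by blast
qed

lemma Vpq_1_1_support:
  assumes "f \<in> Vpq 2 1 1" "f S \<noteq> 0"
  shows "S = {0,2} \<or> S = {0,3} \<or> S = {1,2} \<or> S = {1,3}"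
proof -
  obtain x y where "S \<inter> {0,1} = {x}" "S \<inter> {2,3} = {y}" and xy: "x = 0 \<or> x = 1" "y = 2 \<or> y = 3"
    using Vpq_2_support(2,3)[OF assms] card_Int_doubleton_eq_1 by metis
  then have "S = {x, y}" using Vpq_2_support(1)[OF assms] by (metis insert_is_Un)
  then show ?thesis using xy by blast
qed

lemma Vpq_1_0_support:
  assumes "f \<in> Vpq 2 1 0" "f S \<noteq> 0"
  shows "S = {0} \<or> S = {1}"
proof -
  obtain x where "S \<inter> {0,1} = {x}" and x: "x = 0 \<or> x = 1"
    using Vpq_2_support(2)[OF assms] card_Int_doubleton_eq_1 by metis
  moreover have "S \<inter> {2,3} = {}" using Vpq_2_support(3)[OF assms] by simp
  ultimately have "S = {x}" using Vpq_2_support(1)[OF assms] by (metis Un_empty_right)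
  then show ?thesis using x by blast
qed

lemma Vpq_2_2_support: "f \<in> Vpq 2 2 2 \<Longrightarrow> f S \<noteq> 0 \<Longrightarrow> S = {..<4}"
  using Vpq_n_n_support[of f 2 S] by simp

lemma lessThan_4: "{..<4::nat} = {0,1,2,3}"
  by auto

lemma shuffle_sign_1_1:
  "shuffle_sign {0,2} {1,3} = -1" "shuffle_sign {0,3} {1,2} = 1"
  "shuffle_sign {1,2} {0,3} = 1" "shuffle_sign {1,3} {0,2} = -1"
proof -
  have "{(a, b). a \<in> {0,2::nat} \<and> b \<in> {1,3} \<and> b < a} = {(2,1)}"
    "{(a, b). a \<in> {0,3::nat} \<and> b \<in> {1,2} \<and> b < a} = {(3,1),(3,2)}"
    "{(a, b). a \<in> {1,2::nat} \<and> b \<in> {0,3} \<and> b < a} = {(1,0),(2,0)}"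
    "{(a, b). a \<in> {1,3::nat} \<and> b \<in> {0,2} \<and> b < a} = {(1,0),(3,0),(3,2)}"
    by auto
  then show "shuffle_sign {0,2} {1,3} = -1" "shuffle_sign {0,3} {1,2} = 1"
    "shuffle_sign {1,2} {0,3} = 1" "shuffle_sign {1,3} {0,2} = -1"
    by (simp_all add: shuffle_sign_def)
qed

lemma wedge_Vpq_1_1_top:
  assumes f: "f \<in> Vpq 2 1 1"
  shows "wedge f g {..<4} = - f {0,2} * g {1,3} + f {0,3} * g {1,2} + f {1,2} * g {0,3} - f {1,3} * g {0,2}"
proof -
  let ?T = "{0,1,2,3::nat}"
  have "wedge f g ?T = (\<Sum>A\<in>{{0,2},{0,3},{1,2},{1,3}}. shuffle_sign A (?T - A) * f A * g (?T - A))"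
    by (rule wedge_eq_sum_subset) (use Vpq_1_1_support[OF f] in auto)
  also have "\<dots> = shuffle_sign {0,2} (?T - {0,2}) * f {0,2} * g (?T - {0,2})
      + shuffle_sign {0,3} (?T - {0,3}) * f {0,3} * g (?T - {0,3})
      + shuffle_sign {1,2} (?T - {1,2}) * f {1,2} * g (?T - {1,2})
      + shuffle_sign {1,3} (?T - {1,3}) * f {1,3} * g (?T - {1,3})"
    by (simp add: doubleton_eq_iff algebra_simps)
  also have "\<dots> = - f {0,2} * g {1,3} + f {0,3} * g {1,2} + f {1,2} * g {0,3} - f {1,3} * g {0,2}"
  proof -
    have diff: "?T - {0,2} = {1,3}" "?T - {0,3} = {1,2}" "?T - {1,2} = {0,3}" "?T - {1,3} = {0,2}"
      by auto
    show ?thesis unfolding diff shuffle_sign_1_1 by simp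
  qed
  finally show ?thesis unfolding lessThan_4 .
qed

lemma swap_idx_swap_idx [simp]: "swap_idx n (swap_idx n j) = j"
  unfolding swap_idx_def by auto

lemma swap_idx_image_image [simp]: "swap_idx n ` swap_idx n ` T = T"
  by (simp add: image_image)

lemma conj_inv_doubleton:
  "a < b \<Longrightarrow> conj_inv n {a, b} = (if swap_idx n b < swap_idx n a then 1 else 0)"
proof -
  assume "a < b"
  then have "{(x, y). x \<in> {a, b} \<and> y \<in> {a, b} \<and> x < y \<and> swap_idx n y < swap_idx n x} =
      (if swap_idx n b < swap_idx n a then {(a, b)} else {})"
    by auto
  then show ?thesis by (simp add: conj_inv_def)
qed

lemma conj_form_1_1:
  "conj_form 2 f {0,2} = - cnj (f {0,2})" "conj_form 2 f {0,3} = - cnj (f {1,2})"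
  "conj_form 2 f {1,2} = - cnj (f {0,3})" "conj_form 2 f {1,3} = - cnj (f {1,3})"
proof -
  have swap: "swap_idx 2 ` {0,2} = {0,2}" "swap_idx 2 ` {0,3} = {1,2}"
    "swap_idx 2 ` {1,2} = {0,3}" "swap_idx 2 ` {1,3} = {1,3}"
    by (auto simp: swap_idx_def)
  have inv: "conj_inv 2 {0,2} = 1" "conj_inv 2 {0,3} = 1" "conj_inv 2 {1,2} = 1" "conj_inv 2 {1,3} = 1"
    by (simp_all add: conj_inv_doubleton swap_idx_def)
  show "conj_form 2 f {0,2} = - cnj (f {0,2})" "conj_form 2 f {0,3} = - cnj (f {1,2})"
    "conj_form 2 f {1,2} = - cnj (f {0,3})" "conj_form 2 f {1,3} = - cnj (f {1,3})"
    unfolding conj_form_def swap inv by simp_all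
qed

lemma conj_form_top_degree:
  assumes f: "f \<in> Vpq 2 2 2" and real: "cnj (f {..<4}) = f {..<4}"
  shows "conj_form 2 f = f"
proof
  fix T
  have swap_top: "swap_idx 2 ` {..<4} = {..<4}"
    unfolding lessThan_4 by (auto simp: swap_idx_def)
  show "conj_form 2 f T = f T"
  proof (cases "T = {..<4}")
    case True
    have "{(a, b). a \<in> {0,1,2,3::nat} \<and> b \<in> {0,1,2,3} \<and> a < b \<and> swap_idx 2 b < swap_idx 2 a}
        = {(0,2),(0,3),(1,2),(1,3)}"
      by (auto simp: swap_idx_def)
    then have "conj_inv 2 {..<4} = 4" by (simp add: conj_inv_def lessThan_4)
    then show ?thesis unfolding conj_form_def True swap_top using real by simp
  next
    case False
    then have "swap_idx 2 ` T \<noteq> {..<4}"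
      using swap_top by (metis swap_idx_image_image)
    then have "f (swap_idx 2 ` T) = 0" "f T = 0"
      using False Vpq_2_2_support[OF f] by blast+
    then show ?thesis unfolding conj_form_def by simp
  qed
qed

text \<open>A (1,1)-form on C^2 is (\<i>/2) \<Sum> h j k dz_j wedge dzbar_k, and coeff_matrix recovers h.\<close>
definition coeff_matrix :: "form \<Rightarrow> nat \<Rightarrow> nat \<Rightarrow> complex" where
  "coeff_matrix f j k = -2 * \<i> * f {j, 2 + k}"

lemma coeff_matrix_simps:
  "coeff_matrix f 0 0 = -2 * \<i> * f {0,2}" "coeff_matrix f 0 1 = -2 * \<i> * f {0,3}"
  "coeff_matrix f 1 0 = -2 * \<i> * f {1,2}" "coeff_matrix f 1 1 = -2 * \<i> * f {1,3}"
  by (simp_all add: coeff_matrix_def)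

lemma adjoint2_coeff_matrix_conj_form: "adjoint2 (coeff_matrix f) (coeff_matrix (conj_form 2 f))"
  unfolding adjoint2_def
proof (intro allI impI)
  fix j k :: nat assume "j < 2" "k < 2"
  then have "j = 0 \<or> j = 1" "k = 0 \<or> k = 1" by auto
  then show "coeff_matrix (conj_form 2 f) j k = cnj (coeff_matrix f k j)"
    by (elim disjE; simp only: coeff_matrix_simps conj_form_1_1) simp_all
qed

lemma wedge_Vpq_1_1_top_mixed_disc:
  assumes "f \<in> Vpq 2 1 1"
  shows "4 * wedge f g {..<4} = mixed_disc (coeff_matrix f) (coeff_matrix g)"
  unfolding wedge_Vpq_1_1_top[OF assms] mixed_disc_def coeff_matrix_simps
  by (simp add: algebra_simps)

lemma dz_form_Vpq: "dz_form 2 v \<in> Vpq 2 1 0"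
  unfolding Vpq_def mem_Collect_eq
proof (intro allI impI)
  fix S assume "dz_form 2 v S \<noteq> 0"
  then obtain x where "S = {x}" "x < 2"
    by (auto simp: dz_form_def is_singleton_def split: if_splits)
  then show "S \<subseteq> {..<2 * 2} \<and> card (S \<inter> {..<2}) = 1 \<and> card (S \<inter> {2..<2 * 2}) = 0"
    by auto
qed

lemma dz_form_singleton: "j < 2 \<Longrightarrow> dz_form 2 v {j} = v j"
  by (simp add: dz_form_def)

lemma conj_dz_form_Vpq: "conj_form 2 (dz_form 2 v) \<in> Vpq 2 0 1"
  unfolding Vpq_def mem_Collect_eq
proof (intro allI impI)
  fix T assume "conj_form 2 (dz_form 2 v) T \<noteq> 0"
  then have "dz_form 2 v (swap_idx 2 ` T) \<noteq> 0" by (auto simp: conj_form_def)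
  then obtain x where x: "swap_idx 2 ` T = {x}" "x < 2"
    by (auto simp: dz_form_def is_singleton_def split: if_splits)
  have "T = swap_idx 2 ` swap_idx 2 ` T" by simp
  also have "\<dots> = {x + 2}" using x by (simp add: swap_idx_def)
  finally show "T \<subseteq> {..<2 * 2} \<and> card (T \<inter> {..<2}) = 0 \<and> card (T \<inter> {2..<2 * 2}) = 1"
    using x by auto
qed

lemma conj_dz_form_singleton: "k < 2 \<Longrightarrow> conj_form 2 (dz_form 2 v) {2 + k} = cnj (v k)"
proof -
  assume k: "k < 2"
  then have "swap_idx 2 ` {2 + k} = {k}" by (simp add: swap_idx_def)
  moreover have "conj_inv 2 {k} = 0" unfolding conj_inv_def card_eq_0_iff by auto
  ultimately show ?thesis using k by (simp add: conj_form_def dz_form_singleton)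
qed

lemma wedge_Vpq_1_0_left:
  assumes f: "f \<in> Vpq 2 1 0" and j: "j < 2" and k: "k < 2"
  shows "wedge f g {j, 2 + k} = f {j} * g {2 + k}"
proof -
  have "wedge f g {j, 2 + k} = (\<Sum>A\<in>{{j}}. shuffle_sign A ({j, 2 + k} - A) * f A * g ({j, 2 + k} - A))"
  proof (rule wedge_eq_sum_subset)
    show "\<forall>A\<in>Pow {j, 2 + k} - {{j}}. f A * g ({j, 2 + k} - A) = 0"
      using Vpq_1_0_support[OF f] j k by fastforce
  qed auto
  moreover have "{j, 2 + k} - {j} = {2 + k}" using j by auto
  moreover have "shuffle_sign {j} {2 + k} = 1"
  proof -
    have no_inversions: "{(a, b). a \<in> {j} \<and> b \<in> {2 + k} \<and> b < a} = {}" using j by auto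
    show ?thesis unfolding shuffle_sign_def no_inversions by simp
  qed
  ultimately show ?thesis by simp
qed

lemma kaehler_Vpq:
  assumes "kaehler 2 \<omega>"
  shows "\<omega> \<in> Vpq 2 1 1"
proof -
  obtain A :: "nat \<Rightarrow> nat \<Rightarrow> complex"
    where \<omega>: "\<omega> = (\<lambda>S. \<Sum>l<2. (\<i> / 2) * wedge (dz_form 2 (A l)) (conj_form 2 (dz_form 2 (A l))) S)"
    using assms unfolding kaehler_def by blast
  have "wedge (dz_form 2 (A l)) (conj_form 2 (dz_form 2 (A l))) \<in> Vpq 2 (1 + 0) (0 + 1)" for l
    by (rule wedge_Vpq[OF dz_form_Vpq conj_dz_form_Vpq])
  then show ?thesis unfolding \<omega> by (intro Vpq_sum) simp
qed

lemma kaehler_coeff_matrix: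
  assumes "kaehler 2 \<omega>"
  obtains A where "invertible_mat 2 A"
    "\<And>j k. j < 2 \<Longrightarrow> k < 2 \<Longrightarrow> coeff_matrix \<omega> j k = A 0 j * cnj (A 0 k) + A 1 j * cnj (A 1 k)"
proof -
  obtain A where A: "invertible_mat 2 A"
    and \<omega>: "\<omega> = (\<lambda>S. \<Sum>l<2. (\<i> / 2) * wedge (dz_form 2 (A l)) (conj_form 2 (dz_form 2 (A l))) S)"
    using assms unfolding kaehler_def by blast
  have "coeff_matrix \<omega> j k = A 0 j * cnj (A 0 k) + A 1 j * cnj (A 1 k)" if "j < 2" "k < 2" for j k
  proof -
    have "wedge (dz_form 2 (A l)) (conj_form 2 (dz_form 2 (A l))) {j, 2 + k} = A l j * cnj (A l k)" for l
      using wedge_Vpq_1_0_left[OF dz_form_Vpq that] dz_form_singleton conj_dz_form_singleton that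
      by simp
    then show ?thesis
      unfolding \<omega> coeff_matrix_def by (simp add: numeral_2_eq_2 algebra_simps)
  qed
  with A that show ?thesis by blast
qed

lemma invertible_mat_2_det:
  assumes "invertible_mat 2 A"
  shows "A 0 0 * A 1 1 - A 0 1 * A 1 0 \<noteq> 0"
proof -
  obtain B where B: "\<forall>i<2. \<forall>j<2. (\<Sum>k<2. A i k * B k j) = (if i = j then 1 else 0)"
    using assms unfolding invertible_mat_def by blast
  have "(A 0 0 * A 1 1 - A 0 1 * A 1 0) * (B 0 0 * B 1 1 - B 0 1 * B 1 0) =
        (A 0 0 * B 0 0 + A 0 1 * B 1 0) * (A 1 0 * B 0 1 + A 1 1 * B 1 1)
        - (A 0 0 * B 0 1 + A 0 1 * B 1 1) * (A 1 0 * B 0 0 + A 1 1 * B 1 0)"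
    by (simp add: algebra_simps)
  also have "\<dots> = 1"
    using B[rule_format, of 0 0] B[rule_format, of 0 1] B[rule_format, of 1 0] B[rule_format, of 1 1]
    by (simp add: numeral_2_eq_2)
  finally show ?thesis by auto
qed

lemma kaehler_quad_form_pos:
  assumes K: "kaehler 2 K" and x: "x0 \<noteq> 0 \<or> x1 \<noteq> 0"
  shows "0 < quad_form (coeff_matrix K) x0 x1"
proof -
  obtain A where A: "invertible_mat 2 A"
    and h: "\<And>j k. j < 2 \<Longrightarrow> k < 2 \<Longrightarrow> coeff_matrix K j k = A 0 j * cnj (A 0 k) + A 1 j * cnj (A 1 k)"
    using kaehler_coeff_matrix[OF K] by metis
  define y0 where "y0 = A 0 0 * x0 + A 0 1 * x1"
  define y1 where "y1 = A 1 0 * x0 + A 1 1 * x1"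
  have "quad_form (coeff_matrix K) x0 x1 = y0 * cnj y0 + y1 * cnj y1"
    unfolding quad_form_def using h[of 0 0] h[of 0 1] h[of 1 0] h[of 1 1]
    by (simp add: y0_def y1_def algebra_simps)
  also have "\<dots> = of_real ((cmod y0)\<^sup>2 + (cmod y1)\<^sup>2)"
    by (simp only: of_real_add complex_norm_square)
  finally have q: "quad_form (coeff_matrix K) x0 x1 = of_real ((cmod y0)\<^sup>2 + (cmod y1)\<^sup>2)" .
  have "y0 \<noteq> 0 \<or> y1 \<noteq> 0"
  proof (rule ccontr)
    assume "\<not> (y0 \<noteq> 0 \<or> y1 \<noteq> 0)"
    then have y: "y0 = 0" "y1 = 0" by auto
    define d where "d = A 0 0 * A 1 1 - A 0 1 * A 1 0"
    have d: "d \<noteq> 0" using invertible_mat_2_det[OF A] by (simp add: d_def)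
    have "d * x0 = A 1 1 * y0 - A 0 1 * y1" "d * x1 = A 0 0 * y1 - A 1 0 * y0"
      by (simp_all add: d_def y0_def y1_def algebra_simps)
    then have "x0 = 0" "x1 = 0" using y d by simp_all
    then show False using x by simp
  qed
  then have "(cmod y0)\<^sup>2 + (cmod y1)\<^sup>2 > 0" by (simp add: sum_power2_gt_zero_iff)
  then show ?thesis unfolding q complex_pos_iff by blast
qed

lemma kaehler_wpow_2:
  assumes K: "kaehler 2 \<omega>"
  shows "wpow \<omega> 2 \<in> Vpq 2 2 2" "0 < wpow \<omega> 2 {..<4}"
proof -
  obtain A where A: "invertible_mat 2 A"
    and h: "\<And>j k. j < 2 \<Longrightarrow> k < 2 \<Longrightarrow> coeff_matrix \<omega> j k = A 0 j * cnj (A 0 k) + A 1 j * cnj (A 1 k)"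
    using kaehler_coeff_matrix[OF K] by metis
  have \<omega>: "\<omega> \<in> Vpq 2 1 1" by (rule kaehler_Vpq[OF K])
  have sq: "wpow \<omega> 2 = wedge \<omega> \<omega>"
    by (simp add: numeral_2_eq_2 wedge_unit_form_right[OF \<omega>])
  have "wedge \<omega> \<omega> \<in> Vpq 2 (1 + 1) (1 + 1)" by (rule wedge_Vpq[OF \<omega> \<omega>])
  then show "wpow \<omega> 2 \<in> Vpq 2 2 2" unfolding sq one_add_one .
  define d where "d = A 0 0 * A 1 1 - A 0 1 * A 1 0"
  have "4 * wpow \<omega> 2 {..<4} = mixed_disc (coeff_matrix \<omega>) (coeff_matrix \<omega>)"
    unfolding sq by (rule wedge_Vpq_1_1_top_mixed_disc[OF \<omega>])
  also have "\<dots> = 2 * (d * cnj d)"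
    unfolding mixed_disc_def using h[of 0 0] h[of 0 1] h[of 1 0] h[of 1 1]
    by (simp add: d_def algebra_simps)
  also have "\<dots> = of_real (2 * (cmod d)\<^sup>2)"
    by (simp only: of_real_mult complex_norm_square) simp
  finally have "wpow \<omega> 2 {..<4} = of_real ((cmod d)\<^sup>2 / 2)"
    by (simp add: field_simps)
  moreover have "(cmod d)\<^sup>2 / 2 > 0" using invertible_mat_2_det[OF A] by (simp add: d_def)
  ultimately show "0 < wpow \<omega> 2 {..<4}" unfolding complex_pos_iff by blast
qed

section \<open>The Hodge-Riemann property of the determinant\<close>

lemma hodge_riemann_top_degree:
  assumes \<Omega>: "\<Omega> \<in> Vpq 2 2 2" and pos: "0 < \<Omega> {..<4}" and K: "kaehler 2 \<omega>"
  shows "hodge_riemann 2 \<omega> 2 \<Omega>"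
proof -
  define P where "P t S = complex_of_real (1 - t) * \<Omega> S + complex_of_real t * wpow \<omega> 2 S"
    for t :: real and S
  have P_Vpq: "P t \<in> Vpq 2 2 2" for t
    unfolding P_def[abs_def] by (intro Vpq_lincomb \<Omega> kaehler_wpow_2(1)[OF K])
  obtain a b where a: "a > 0" "\<Omega> {..<4} = of_real a" and b: "b > 0" "wpow \<omega> 2 {..<4} = of_real b"
    using pos kaehler_wpow_2(2)[OF K] unfolding complex_pos_iff by blast
  have P_top: "P t {..<4} = of_real ((1 - t) * a + t * b)" for t
    unfolding P_def a(2) b(2) by simp
  have P_top_pos: "(1 - t) * a + t * b > 0" if "t \<in> {0..1}" for t
  proof (cases "t = 0")
    case False
    then have "t * b > 0" using that b by simp
    moreover have "(1 - t) * a \<ge> 0" using that a by simp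
    ultimately show ?thesis by linarith
  qed (use a in simp)
  have P_VR: "P t \<in> VR 2 2" for t
    using P_Vpq conj_form_top_degree[OF P_Vpq] unfolding VR_def P_top by simp
  have P_lefschetz: "lefschetz 2 0 0 (wedge (P t) (wpow \<omega> 0))" if "t \<in> {0..1}" for t
  proof -
    have "P t {..<4} \<noteq> 0" using P_top_pos[OF that] unfolding P_top of_real_eq_0_iff by linarith
    then have "P t {..<2*2} \<noteq> 0" by simp
    then show ?thesis
      using lefschetz_0_0_top_degree[OF P_Vpq] by (simp add: wedge_unit_form_right[OF P_Vpq])
  qed
  have "continuous_on {0..1} (\<lambda>t. P t S)" for S
    unfolding P_def by (intro continuous_intros)
  moreover have "P 0 = \<Omega>" "P 1 = wpow \<omega> 2" by (simp_all add: P_def[abs_def])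
  ultimately show ?thesis
    unfolding hodge_riemann_def using P_VR P_lefschetz by (intro conjI allI impI exI[of _ P]) auto
qed

lemma griffiths_positive_adjoint2:
  assumes "griffiths_positive 2 2 M" "i < 2" "j < 2"
  shows "adjoint2 (coeff_matrix (M i j)) (coeff_matrix (M j i))"
proof -
  have "M j i = conj_form 2 (M i j)" using assms unfolding griffiths_positive_def by blast
  then show ?thesis using adjoint2_coeff_matrix_conj_form by simp
qed

lemma griffiths_positive_block_positive:
  assumes "griffiths_positive 2 2 M"
  shows "block_positive (coeff_matrix (M 0 0)) (coeff_matrix (M 0 1)) (coeff_matrix (M 1 1))"
  unfolding block_positive_def
proof (intro allI impI)
  fix t0 t1 x0 x1 :: complex
  assume t: "t0 \<noteq> 0 \<or> t1 \<noteq> 0" and x: "x0 \<noteq> 0 \<or> x1 \<noteq> 0"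
  define \<theta> where "\<theta> i = (if i = 0 then t0 else t1)" for i :: nat
  have "\<exists>i<2. \<theta> i \<noteq> 0"
  proof (cases "t0 = 0")
    case True
    then show ?thesis using t by (intro exI[of _ 1]) (simp add: \<theta>_def)
  qed (intro exI[of _ 0], simp add: \<theta>_def)
  then have K: "kaehler 2 (\<lambda>S. \<Sum>i<2. \<Sum>j<2. \<theta> i * M i j S * cnj (\<theta> j))"
    using assms unfolding griffiths_positive_def by blast
  have "adjoint2 (coeff_matrix (M 0 1)) (coeff_matrix (M 1 0))"
    by (rule griffiths_positive_adjoint2[OF assms]) simp_all
  then have adj: "cnj (quad_form (coeff_matrix (M 0 1)) x0 x1) = quad_form (coeff_matrix (M 1 0)) x0 x1"
    by (simp add: quad_form_adjoint2)
  have "quad_form (coeff_matrix (\<lambda>S. \<Sum>i<2. \<Sum>j<2. \<theta> i * M i j S * cnj (\<theta> j))) x0 x1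
      = block_form (coeff_matrix (M 0 0)) (coeff_matrix (M 0 1)) (coeff_matrix (M 1 1)) t0 t1 x0 x1"
    unfolding block_form_def adj unfolding quad_form_def coeff_matrix_def sum_lessThan_2 \<theta>_def
    by (simp add: algebra_simps)
  then show "0 < block_form (coeff_matrix (M 0 0)) (coeff_matrix (M 0 1)) (coeff_matrix (M 1 1)) t0 t1 x0 x1"
    using kaehler_quad_form_pos[OF K x] by simp
qed

lemma det2_Vpq:
  assumes "\<forall>i<2. \<forall>j<2. M i j \<in> Vpq 2 1 1"
  shows "det2 M \<in> Vpq 2 2 2"
proof -
  have "wedge (M i j) (M k l) \<in> Vpq 2 (1 + 1) (1 + 1)" if "i < 2" "j < 2" "k < 2" "l < 2" for i j k l
    using assms that by (intro wedge_Vpq) auto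
  then have "wedge (M i j) (M k l) \<in> Vpq 2 2 2" if "i < 2" "j < 2" "k < 2" "l < 2" for i j k l
    using that unfolding one_add_one by blast
  then show ?thesis
    unfolding det2_def using Vpq_lincomb[of _ 2 2 2 _ 1 "-1"] by simp
qed

lemma det2_top_coeff:
  assumes "M 0 0 \<in> Vpq 2 1 1" "M 0 1 \<in> Vpq 2 1 1"
  shows "det2 M {..<4} = (mixed_disc (coeff_matrix (M 0 0)) (coeff_matrix (M 1 1))
      - mixed_disc (coeff_matrix (M 0 1)) (coeff_matrix (M 1 0))) / 4"
  using wedge_Vpq_1_1_top_mixed_disc[OF assms(1), of "M 1 1"]
    wedge_Vpq_1_1_top_mixed_disc[OF assms(2), of "M 1 0"]
  unfolding det2_def by (simp add: field_simps)

theorem mainTheorem6: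
  fixes M :: "nat \<Rightarrow> nat \<Rightarrow> form"
  assumes "\<forall>i<2. \<forall>j<2. M i j \<in> Vpq 2 1 1"
    and "griffiths_positive 2 2 M"
  shows "\<forall>\<omega>. kaehler 2 \<omega> \<longrightarrow> hodge_riemann 2 \<omega> 2 (det2 M)"
proof (intro allI impI)
  fix \<omega> assume K: "kaehler 2 \<omega>"
  have V: "M 0 0 \<in> Vpq 2 1 1" "M 0 1 \<in> Vpq 2 1 1" using assms(1) by simp_all
  have "0 < mixed_disc (coeff_matrix (M 0 0)) (coeff_matrix (M 1 1))
      - mixed_disc (coeff_matrix (M 0 1)) (coeff_matrix (M 1 0))"
    by (intro mixed_disc_pos griffiths_positive_adjoint2 griffiths_positive_block_positive assms(2))
      simp_all
  then have "0 < det2 M {..<4}"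
    unfolding det2_top_coeff[of M, OF V] by (simp add: less_complex_def)
  then show "hodge_riemann 2 \<omega> 2 (det2 M)"
    by (rule hodge_riemann_top_degree[OF det2_Vpq[OF assms(1)] _ K])
qed

end
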